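(* For every integer $n\ge0$ and all real $x,y$, $$\sum_{m=0}^{\lfloor n/2\rfloor}\binom{n}{2m}E_{n-2m}(x)(-1)^m y^{2m}=\sum_{k=0}^{n}\sum_{l=0}^{k}\sum_{m=0}^{\lfloor l/2\rfloor}S_2(n,k)\,\lambda^{n+l-k-2m}\binom{k}{l}E_{k-l,\lambda}(x)(-1)^m y^{2m}S_1(l,2m).$$
   Context: Let $\lambda$ be a nonzero real number; generating functions are formal power series in $t$. $e_\lambda^{x}(t)=(1+\lambda t)^{x/\lambda}$. The type 2 degenerate Euler polynomials are defined by $\frac{2}{e_\lambda^{1/2}(t)+e_\lambda^{-1/2}(t)}e_\lambda^{x}(t)=\sum_{n\ge0}E_{n,\lambda}(x)\frac{t^n}{n!}$. The (non-degenerate) type 2 Euler polynomials are defined by $\frac{2}{e^{t/2}+e^{-t/2}}e^{xt}=\sum_{n\ge0}E_n(x)\frac{t^n}{n!}$. $S_1(n,k)$ are the signed Stirling numbers of the first kind, $\frac{1}{k!}(\log(1+t))^k=\sum_{n\ge k}S_1(n,k)\frac{t^n}{n!}$, and $S_2(n,k)$ are the Stirling numbers of the second kind, $\frac{1}{k!}(e^t-1)^k=\sum_{n\ge k}S_2(n,k)\frac{t^n}{n!}$. *)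

theory Defs
  imports "HOL-Computational_Algebra.Formal_Power_Series" "HOL-Combinatorics.Stirling"
begin

(* degenerate exponential e_lambda^x(t) = (1 + lambda t)^(x/lambda), as a formal power series in t *)
definition deg_exp :: "real \<Rightarrow> real \<Rightarrow> real fps" where
  "deg_exp lam x = fps_binomial (x / lam) oo (fps_const lam * fps_X)"

definition deg_euler2 :: "real \<Rightarrow> nat \<Rightarrow> real \<Rightarrow> real" where
  "deg_euler2 lam n x =
     fact n * fps_nth ((fps_const 2 * inverse (deg_exp lam (1/2) + deg_exp lam (-1/2))) * deg_exp lam x) n"

definition euler2 :: "nat \<Rightarrow> real \<Rightarrow> real" where
  "euler2 n x =
     fact n * fps_nth ((fps_const 2 * inverse (fps_exp (1/2) + fps_exp (-1/2))) * fps_exp x) n"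

definition S1 :: "nat \<Rightarrow> nat \<Rightarrow> real" where
  "S1 n k = (-1) ^ (n - k) * real (stirling n k)"

definition S2 :: "nat \<Rightarrow> nat \<Rightarrow> real" where
  "S2 n k = real (Stirling n k)"

end

theory Submission imports Defs begin

text \<open>
  Put \<open>D(t) = (e\<^sup>\<lambda>\<^sup>t - 1)/\<lambda>\<close> and \<open>H(t) = log(1 + \<lambda>t)/\<lambda>\<close>, which are compositional inverses.
  Since \<open>e\<^sub>\<lambda>\<^sup>x(D(t)) = e\<^sup>x\<^sup>t\<close>, substituting \<open>D\<close> into the generating function of the
  \<open>E\<^sub>n\<^sub>,\<^sub>\<lambda>(x)\<close> yields that of the \<open>E\<^sub>n(x)\<close>, and \<open>cos(y H(D(t))) = cos(yt)\<close>. Hence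
  \<open>cos(yt) \<Sum> E\<^sub>n(x) t\<^sup>n/n!\<close> is obtained from \<open>cos(y H(t)) \<Sum> E\<^sub>n\<^sub>,\<^sub>\<lambda>(x) t\<^sup>n/n!\<close> by substituting
  \<open>D\<close>. The coefficients of the powers of \<open>D\<close> and \<open>H\<close> are Stirling numbers of the second
  and first kind, and comparing \<open>n\<close>-th coefficients gives the identity.
\<close>

unbundle fps_syntax

lemma S1_Suc_Suc: "S1 (Suc n) (Suc k) = S1 n k - real n * S1 n (Suc k)"
proof (cases "k < n")
  case True
  then obtain d where n: "n = k + Suc d" by (metis add_Suc_right less_imp_Suc_add)
  then have "n - k = Suc d" "n - Suc k = d" by auto
  then show ?thesis unfolding S1_def by (simp add: algebra_simps n)
next
  case False
  then show ?thesis by (cases "k = n") (auto simp: S1_def)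
qed

lemma S2_Suc_Suc: "S2 (Suc n) (Suc k) = real (Suc k) * S2 n (Suc k) + S2 n k"
  by (simp add: S2_def algebra_simps)

lemma S1_0_left: "S1 0 k = (if k = 0 then 1 else 0)"
  by (cases k) (auto simp: S1_def)

lemma S2_0_left: "S2 0 k = (if k = 0 then 1 else 0)"
  by (cases k) (auto simp: S2_def)

lemma S1_Suc_0 [simp]: "S1 (Suc n) 0 = 0"
  by (simp add: S1_def)

lemma S2_Suc_0 [simp]: "S2 (Suc n) 0 = 0"
  by (simp add: S2_def)

lemma S1_less: "n < k \<Longrightarrow> S1 n k = 0"
  by (simp add: S1_def)

lemma S2_less: "n < k \<Longrightarrow> S2 n k = 0"
  by (simp add: S2_def)

lemma mult_power_diff_Suc:
  fixes a :: "'a::monoid_mult"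
  shows "k < n \<Longrightarrow> a * a ^ (n - Suc k) = a ^ (n - k)"
  by (metis Suc_diff_Suc power_Suc)

definition expm1_scaled :: "real \<Rightarrow> real fps" where
  "expm1_scaled lam = fps_const (1/lam) * (fps_exp lam - 1)"

definition ln1p_scaled :: "real \<Rightarrow> real fps" where
  "ln1p_scaled lam = Abs_fps (\<lambda>n. if n = 0 then 0 else (-1) ^ (n+1) * lam ^ (n-1) / real n)"

lemma expm1_scaled_nth_0 [simp]: "expm1_scaled lam $ 0 = 0"
  by (simp add: expm1_scaled_def)

lemma ln1p_scaled_nth_0 [simp]: "ln1p_scaled lam $ 0 = 0"
  by (simp add: ln1p_scaled_def)

lemma fps_exp_eq_expm1_scaled: "lam \<noteq> 0 \<Longrightarrow> fps_exp lam = 1 + fps_const lam * expm1_scaled lam"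
proof -
  assume "lam \<noteq> 0"
  then have "fps_const lam * fps_const (1/lam) = 1"
    by simp
  then have "fps_const lam * expm1_scaled lam = fps_exp lam - 1"
    unfolding expm1_scaled_def by (metis mult.assoc mult_1)
  then show ?thesis
    by simp
qed

lemma fps_deriv_expm1_scaled: "lam \<noteq> 0 \<Longrightarrow> fps_deriv (expm1_scaled lam) = fps_exp lam"
  by (simp add: expm1_scaled_def fps_deriv_mult_const_left)

lemma fps_deriv_ln1p_scaled: "fps_deriv (ln1p_scaled lam) * (1 + fps_const lam * fps_X) = 1"
proof -
  have coeff: "fps_deriv (ln1p_scaled lam) $ n = (- lam) ^ n" for n
    by (simp add: ln1p_scaled_def field_simps power_minus[of lam] del: of_nat_Suc)
  have "fps_deriv (ln1p_scaled lam) + fps_const lam * (fps_X * fps_deriv (ln1p_scaled lam)) = 1"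
  proof (rule fps_ext)
    show "(fps_deriv (ln1p_scaled lam) + fps_const lam * (fps_X * fps_deriv (ln1p_scaled lam))) $ n
        = (1::real fps) $ n" for n
      by (cases n) (simp_all add: coeff del: fps_deriv_nth)
  qed
  then show ?thesis
    by (simp add: algebra_simps)
qed

lemma ln1p_scaled_compose_expm1_scaled:
  assumes "lam \<noteq> 0"
  shows "ln1p_scaled lam oo expm1_scaled lam = fps_X"
proof -
  let ?D = "expm1_scaled lam" and ?H = "ln1p_scaled lam"
  have "(fps_deriv ?H * (1 + fps_const lam * fps_X)) oo ?D = 1"
    by (simp add: fps_deriv_ln1p_scaled)
  then have "(fps_deriv ?H oo ?D) * fps_exp lam = 1"
    by (simp add: fps_compose_mult_distrib fps_compose_add_distrib fps_exp_eq_expm1_scaled[OF assms])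
  then have "fps_deriv (?H oo ?D) = fps_deriv fps_X"
    by (simp add: fps_compose_deriv fps_deriv_expm1_scaled[OF assms])
  then show ?thesis
    by (subst (asm) fps_deriv_eq_iff) simp
qed

text \<open>Substituting \<open>D\<close> into \<open>(1 + \<lambda>t)\<^sup>x\<^sup>/\<^sup>\<lambda>\<close> gives a series \<open>G\<close> with \<open>G' = x G\<close> and \<open>G(0) = 1\<close>.\<close>

lemma deg_exp_compose_expm1_scaled:
  assumes "lam \<noteq> 0"
  shows "deg_exp lam x oo expm1_scaled lam = fps_exp x"
proof -
  define a where "a = x / lam"
  define G where "G = fps_binomial a oo (fps_exp lam - 1)"
  have E0: "(fps_exp lam - 1) $ 0 = (0::real)" by simp
  have "(fps_const lam * fps_X) oo expm1_scaled lam = fps_exp lam - 1"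
    using fps_exp_eq_expm1_scaled[OF assms] by (simp add: fps_compose_mult_distrib)
  then have "deg_exp lam x oo expm1_scaled lam = G"
    unfolding deg_exp_def G_def a_def by (simp add: fps_compose_assoc[symmetric])
  moreover have "fps_deriv G = fps_const x * G"
  proof -
    have inv: "inverse (1 + fps_X) oo (fps_exp lam - 1) = inverse (fps_exp lam :: real fps)"
      by (simp add: fps_inverse_compose[OF E0] fps_compose_add_distrib E0)
    have "fps_deriv G = ((fps_const a * fps_binomial a * inverse (1 + fps_X)) oo (fps_exp lam - 1))
                        * (fps_const lam * fps_exp lam)"
      unfolding G_def by (simp add: fps_compose_deriv[OF E0] fps_binomial_deriv fps_divide_unit)
    also have "\<dots> = fps_const a * G * (inverse (fps_exp lam) * fps_exp lam) * fps_const lam"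
      unfolding fps_compose_mult_distrib[OF E0] inv G_def by (simp add: algebra_simps)
    also have "\<dots> = fps_const x * G"
      using assms by (simp add: inverse_mult_eq_1 a_def)
    finally show ?thesis .
  qed
  then have "G = fps_const (G $ 0) * fps_exp x"
    by (subst (asm) fps_exp_unique_ODE)
  ultimately show ?thesis
    by (simp add: G_def)
qed

lemma expm1_scaled_power_nth:
  assumes "lam \<noteq> 0"
  shows "(expm1_scaled lam ^ k) $ n = lam ^ (n - k) * fact k * S2 n k / fact n"
proof (induction n arbitrary: k)
  case 0
  then show ?case by (cases k) (simp_all add: S2_0_left)
next
  case (Suc n)
  show ?case
  proof (cases k)
    case 0
    then show ?thesis by simp
  next
    case (Suc j)
    let ?D = "expm1_scaled lam"
    have "fps_deriv (?D ^ Suc j) = fps_const (real (Suc j)) * fps_exp lam * ?D ^ j"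
      using assms by (subst fps_deriv_power) (simp add: fps_deriv_expm1_scaled del: power_Suc)
    also have "\<dots> = fps_const (real (Suc j)) * (?D ^ j + fps_const lam * ?D ^ Suc j)"
      using assms by (simp add: fps_exp_eq_expm1_scaled algebra_simps)
    finally have "fps_deriv (?D ^ Suc j) $ n = \<dots> $ n"
      by (rule arg_cong)
    then have "real (Suc n) * (?D ^ Suc j) $ Suc n
        = real (Suc j) * ((?D ^ j) $ n + lam * (?D ^ Suc j) $ n)"
      by (simp add: algebra_simps del: power_Suc)
    also have "lam * (?D ^ Suc j) $ n = lam ^ (n - j) * fact (Suc j) * S2 n (Suc j) / fact n"
      by (cases "j < n") (simp_all add: Suc.IH mult_power_diff_Suc[symmetric] S2_less del: power_Suc)
    finally show ?thesis
      unfolding Suc Suc.IH by (simp add: S2_Suc_Suc field_simps del: of_nat_Suc power_Suc)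
  qed
qed

lemma fps_nth_of_deriv_mult_one_plus_X:
  fixes P Q :: "'a::comm_ring_1 fps"
  assumes "fps_deriv P * (1 + fps_const c * fps_X) = Q"
  shows "of_nat (Suc n) * P $ Suc n + c * of_nat n * P $ n = Q $ n"
proof -
  have "Q = fps_deriv P + fps_const c * (fps_X * fps_deriv P)"
    using assms by (simp add: algebra_simps)
  then show ?thesis
    by (cases n) (simp_all add: algebra_simps)
qed

lemma ln1p_scaled_power_nth:
  "(ln1p_scaled lam ^ k) $ n = lam ^ (n - k) * fact k * S1 n k / fact n"
proof (induction n arbitrary: k)
  case 0
  then show ?case by (cases k) (simp_all add: S1_0_left)
next
  case (Suc n)
  show ?case
  proof (cases k)
    case 0
    then show ?thesis by simp
  next
    case (Suc j)
    let ?H = "ln1p_scaled lam"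
    have "fps_deriv (?H ^ Suc j) = fps_const (real (Suc j)) * ?H ^ j * fps_deriv ?H"
      by (subst fps_deriv_power) (simp add: algebra_simps del: power_Suc)
    then have "fps_deriv (?H ^ Suc j) * (1 + fps_const lam * fps_X) = fps_const (real (Suc j)) * ?H ^ j"
      using fps_deriv_ln1p_scaled[of lam] by (simp add: mult.assoc del: power_Suc)
    from fps_nth_of_deriv_mult_one_plus_X[OF this, of n]
    have "real (Suc n) * (?H ^ Suc j) $ Suc n = real (Suc j) * (?H ^ j) $ n - real n * (lam * (?H ^ Suc j) $ n)"
      by (simp only: fps_mult_left_const_nth) (simp add: algebra_simps)
    also have "lam * (?H ^ Suc j) $ n = lam ^ (n - j) * fact (Suc j) * S1 n (Suc j) / fact n"
      by (cases "j < n") (simp_all add: Suc.IH mult_power_diff_Suc[symmetric] S1_less del: power_Suc)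
    finally show ?thesis
      unfolding Suc Suc.IH by (simp add: S1_Suc_Suc field_simps del: of_nat_Suc power_Suc)
  qed
qed

definition euler2_gf :: "real \<Rightarrow> real fps" where
  "euler2_gf x = fps_const 2 * inverse (fps_exp (1/2) + fps_exp (-1/2)) * fps_exp x"

definition deg_euler2_gf :: "real \<Rightarrow> real \<Rightarrow> real fps" where
  "deg_euler2_gf lam x =
     fps_const 2 * inverse (deg_exp lam (1/2) + deg_exp lam (-1/2)) * deg_exp lam x"

lemma euler2_gf_nth: "euler2_gf x $ n = euler2 n x / fact n"
  by (simp add: euler2_gf_def euler2_def)

lemma deg_euler2_gf_nth: "deg_euler2_gf lam x $ n = deg_euler2 lam n x / fact n"
  by (simp add: deg_euler2_gf_def deg_euler2_def)

lemma deg_euler2_gf_compose_expm1_scaled: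
  assumes "lam \<noteq> 0"
  shows "deg_euler2_gf lam x oo expm1_scaled lam = euler2_gf x"
proof -
  have "(deg_exp lam (1/2) + deg_exp lam (-1/2)) $ 0 \<noteq> 0"
    by (simp add: deg_exp_def)
  then show ?thesis
    unfolding deg_euler2_gf_def euler2_gf_def
    by (simp add: fps_compose_mult_distrib fps_inverse_compose fps_compose_add_distrib
                  deg_exp_compose_expm1_scaled[OF assms])
qed

lemma fps_cos_compose_ln1p_compose_expm1_scaled:
  assumes "lam \<noteq> 0"
  shows "(fps_cos y oo ln1p_scaled lam) oo expm1_scaled lam = fps_cos y"
  by (simp add: fps_compose_assoc[symmetric] ln1p_scaled_compose_expm1_scaled[OF assms])

lemma sum_atLeast0_atMost_even:
  fixes f :: "nat \<Rightarrow> 'a::comm_monoid_add"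
  assumes "\<And>i. odd i \<Longrightarrow> f i = 0"
  shows "(\<Sum>i=0..n. f i) = (\<Sum>m=0..n div 2. f (2*m))"
proof (induction n)
  case 0
  then show ?case by simp
next
  case (Suc n)
  show ?case
  proof (cases "even (Suc n)")
    case True
    then have "Suc n div 2 = Suc (n div 2)" and "2 * Suc (n div 2) = Suc n"
      by (auto elim!: evenE)
    then show ?thesis
      by (simp only: sum.atLeast0_atMost_Suc Suc.IH)
  next
    case False
    then have "Suc n div 2 = n div 2"
      by (auto elim!: oddE)
    then show ?thesis
      using assms[OF False] by (simp add: Suc.IH)
  qed
qed

lemma fps_cos_mult_nth:
  "fact n * (fps_cos y * F) $ n
     = (\<Sum>m=0..n div 2. of_nat (n choose (2*m)) * (fact (n - 2*m) * F $ (n - 2*m)) * (-1)^m * y^(2*m))"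
proof -
  have "(fps_cos y * F) $ n = (\<Sum>m=0..n div 2. fps_cos y $ (2*m) * F $ (n - 2*m))"
    unfolding fps_mult_nth by (rule sum_atLeast0_atMost_even) (simp add: fps_cos_def)
  also have "fact n * \<dots>
      = (\<Sum>m=0..n div 2. of_nat (n choose (2*m)) * (fact (n - 2*m) * F $ (n - 2*m)) * (-1)^m * y^(2*m))"
    unfolding sum_distrib_left
  proof (rule sum.cong[OF refl])
    fix m
    assume "m \<in> {0..n div 2}"
    then have "2*m \<le> n" by auto
    then show "fact n * (fps_cos y $ (2*m) * F $ (n - 2*m))
      = of_nat (n choose (2*m)) * (fact (n - 2*m) * F $ (n - 2*m)) * (-1)^m * y^(2*m)"
      by (simp add: fps_cos_def binomial_fact field_simps)
  qed
  finally show ?thesis .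
qed

lemma fps_cos_compose_ln1p_scaled_nth:
  "(fps_cos y oo ln1p_scaled lam) $ l
     = (\<Sum>m=0..l div 2. (-1)^m * y^(2*m) * lam^(l - 2*m) * S1 l (2*m)) / fact l"
proof -
  have "(fps_cos y oo ln1p_scaled lam) $ l
      = (\<Sum>m=0..l div 2. fps_cos y $ (2*m) * (ln1p_scaled lam ^ (2*m)) $ l)"
    unfolding fps_compose_nth by (rule sum_atLeast0_atMost_even) (simp add: fps_cos_def)
  also have "\<dots> = (\<Sum>m=0..l div 2. (-1)^m * y^(2*m) * lam^(l - 2*m) * S1 l (2*m) / fact l)"
    by (intro sum.cong refl) (simp add: fps_cos_def ln1p_scaled_power_nth)
  finally show ?thesis
    by (simp add: sum_divide_distrib)
qed

lemma fps_compose_expm1_scaled_nth: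
  assumes "lam \<noteq> 0"
  shows "fact n * (F oo expm1_scaled lam) $ n = (\<Sum>k=0..n. S2 n k * lam ^ (n - k) * (fact k * F $ k))"
  by (simp add: fps_compose_nth expm1_scaled_power_nth[OF assms] sum_distrib_left mult_ac)

lemma fact_mult_fps_mult_nth:
  fixes F G :: "'a::field_char_0 fps"
  shows "fact k * (F * G) $ k
     = (\<Sum>l=0..k. of_nat (k choose l) * (fact l * F $ l) * (fact (k - l) * G $ (k - l)))"
  by (simp add: fps_mult_nth sum_distrib_left binomial_fact field_simps)

lemma power_diff_add_diff:
  fixes a :: "'a::monoid_mult"
  assumes "k \<le> n" "j \<le> l"
  shows "a ^ (n + l - k - j) = a ^ (n - k) * a ^ (l - j)"
proof -
  have "n + l - k - j = (n - k) + (l - j)"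
    using assms by simp
  then show ?thesis
    by (simp add: power_add)
qed

theorem mainTheorem13:
  fixes lam x y :: real and n :: nat
  assumes "lam \<noteq> 0"
  shows "(\<Sum>m=0..n div 2. real (n choose (2*m)) * euler2 (n - 2*m) x * (-1)^m * y^(2*m))
       = (\<Sum>k=0..n. \<Sum>l=0..k. \<Sum>m=0..l div 2.
            S2 n k * lam ^ (n + l - k - 2*m) * real (k choose l) * deg_euler2 lam (k - l) x
              * (-1)^m * y^(2*m) * S1 l (2*m))"
proof -
  let ?C = "fps_cos y oo ln1p_scaled lam" and ?A = "deg_euler2_gf lam x"
  have subst_D: "(?C * ?A) oo expm1_scaled lam = fps_cos y * euler2_gf x"
    by (simp add: fps_compose_mult_distrib fps_cos_compose_ln1p_compose_expm1_scaled[OF assms]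
                  deg_euler2_gf_compose_expm1_scaled[OF assms])
  have "(\<Sum>m=0..n div 2. real (n choose (2*m)) * euler2 (n - 2*m) x * (-1)^m * y^(2*m))
      = fact n * (fps_cos y * euler2_gf x) $ n"
    by (simp add: fps_cos_mult_nth euler2_gf_nth)
  also have "\<dots> = fact n * ((?C * ?A) oo expm1_scaled lam) $ n"
    by (simp only: subst_D)
  also have "\<dots> = (\<Sum>k=0..n. S2 n k * lam ^ (n - k) * (\<Sum>l=0..k. real (k choose l)
          * (\<Sum>m=0..l div 2. (-1)^m * y^(2*m) * lam^(l - 2*m) * S1 l (2*m)) * deg_euler2 lam (k - l) x))"
    by (simp add: fps_compose_expm1_scaled_nth[OF assms] fact_mult_fps_mult_nth
                  fps_cos_compose_ln1p_scaled_nth deg_euler2_gf_nth)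
  also have "\<dots> = (\<Sum>k=0..n. \<Sum>l=0..k. \<Sum>m=0..l div 2.
            S2 n k * lam ^ (n + l - k - 2*m) * real (k choose l) * deg_euler2 lam (k - l) x
              * (-1)^m * y^(2*m) * S1 l (2*m))"
    unfolding sum_distrib_left sum_distrib_right
    by (intro sum.cong refl, subst power_diff_add_diff) (auto simp: mult_ac)
  finally show ?thesis .
qed

end
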